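(* $AQ_4$ is fractional strongly maximally matched and fractional strongly super matched; that is, $fsmp(AQ_4)=7$, and for every set $F\subseteq V(AQ_4)\cup E(AQ_4)$ with $|F|=7$ such that $AQ_4-F$ has no fractional perfect matching, the graph $AQ_4-F$ has an isolated vertex.
   Context: The $n$-dimensional augmented cube $AQ_n$ ($n\geq 1$) has vertex set all binary strings $u_1u_2\cdots u_n$. $AQ_1\cong K_2$ on vertices $0,1$. For $n\geq 2$, $AQ_n$ consists of a copy $AQ^0_{n-1}$ of $AQ_{n-1}$ with $0$ prefixed to every label and a copy $AQ^1_{n-1}$ with $1$ prefixed, plus the following edges: $0u_1\cdots u_{n-1}$ is adjacent to $1v_1\cdots v_{n-1}$ iff either $u_i=v_i$ for all $i$ (cross edge) or $u_i\neq v_i$ for all $i$ (complement edge). $AQ_4$ is $7$-regular on $16$ vertices. For $F\subseteq V(G)\cup E(G)$, $G-F$ denotes $G$ with the vertices and edges of $F$ deleted. A fractional perfect matching of $G$ is $f:E(G)\to[0,1]$ with $\sum_{e\ni v}f(e)=1$ for every vertex $v$. A fractional strong matching preclusion (FSMP) set is $F\subseteq V(G)\cup E(G)$ with $G-F$ having no fractional perfect matching; $fsmp(G)$ is the minimum size of an FSMP set, and an FSMP set of that size is optimal. $G$ is fractional strongly maximally matched if $fsmp(G)=\delta(G)$, and fractional strongly super matched if in addition $G-F$ has an isolated vertex for every optimal FSMP set $F$. *)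

theory Defs
  imports Complex_Main
begin

text \<open>Simple graphs are given as a pair (V, E) of a vertex set and a set of
  edges, each edge being a 2-element subset of V.\<close>

type_synonym 'a graph = "'a set \<times> 'a set set"

definition verts :: "'a graph \<Rightarrow> 'a set" where "verts G = fst G"
definition edges :: "'a graph \<Rightarrow> 'a set set" where "edges G = snd G"

text \<open>First letter = copy index; equal first letters: adjacency inside the copy;
  different first letters: cross edge (u = v) or complement edge (all positions differ).\<close>

fun aq_adj :: "bool list \<Rightarrow> bool list \<Rightarrow> bool" where
  "aq_adj (x # u) (y # v) =
     (length u = length v \<and>
      (if x = y then aq_adj u v else (u = v \<or> list_all2 (\<noteq>) u v)))"
| "aq_adj _ _ = False"

definition AQ :: "nat \<Rightarrow> bool list graph" where
  "AQ n = ({u. length u = n},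
           {{u, v} | u v. length u = n \<and> length v = n \<and> aq_adj u v})"

definition degree :: "'a graph \<Rightarrow> 'a \<Rightarrow> nat" where
  "degree G v = card {e \<in> edges G. v \<in> e}"

definition min_degree :: "'a graph \<Rightarrow> nat" where
  "min_degree G = Min (degree G ` verts G)"

definition delete :: "'a graph \<Rightarrow> 'a set \<Rightarrow> 'a set set \<Rightarrow> 'a graph" where
  "delete G FV FE = (verts G - FV, {e \<in> edges G. e \<notin> FE \<and> e \<inter> FV = {}})"

definition frac_perfect_matching :: "'a graph \<Rightarrow> ('a set \<Rightarrow> real) \<Rightarrow> bool" where
  "frac_perfect_matching G f \<longleftrightarrow>
     (\<forall>e \<in> edges G. 0 \<le> f e \<and> f e \<le> 1) \<and>
     (\<forall>v \<in> verts G. (\<Sum>e \<in> {e \<in> edges G. v \<in> e}. f e) = 1)"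

definition has_fpm :: "'a graph \<Rightarrow> bool" where
  "has_fpm G \<longleftrightarrow> (\<exists>f. frac_perfect_matching G f)"

text \<open>F = FV \<union> FE with FV \<subseteq> V(G), FE \<subseteq> E(G); |F| = |FV| + |FE|.\<close>

definition fsmp_set :: "'a graph \<Rightarrow> 'a set \<Rightarrow> 'a set set \<Rightarrow> bool" where
  "fsmp_set G FV FE \<longleftrightarrow>
     FV \<subseteq> verts G \<and> FE \<subseteq> edges G \<and> \<not> has_fpm (delete G FV FE)"

definition fsmp :: "'a graph \<Rightarrow> nat" where
  "fsmp G = (LEAST k. \<exists>FV FE. fsmp_set G FV FE \<and> finite FV \<and> finite FE
                             \<and> card FV + card FE = k)"

definition optimal_fsmp_set :: "'a graph \<Rightarrow> 'a set \<Rightarrow> 'a set set \<Rightarrow> bool" where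
  "optimal_fsmp_set G FV FE \<longleftrightarrow> fsmp_set G FV FE \<and> finite FV \<and> finite FE
      \<and> card FV + card FE = fsmp G"

definition has_isolated_vertex :: "'a graph \<Rightarrow> bool" where
  "has_isolated_vertex G \<longleftrightarrow> (\<exists>v \<in> verts G. \<forall>e \<in> edges G. v \<notin> e)"

definition frac_strongly_maximally_matched :: "'a graph \<Rightarrow> bool" where
  "frac_strongly_maximally_matched G \<longleftrightarrow> fsmp G = min_degree G"

definition frac_strongly_super_matched :: "'a graph \<Rightarrow> bool" where
  "frac_strongly_super_matched G \<longleftrightarrow> frac_strongly_maximally_matched G \<and>
     (\<forall>FV FE. optimal_fsmp_set G FV FE \<longrightarrow> has_isolated_vertex (delete G FV FE))"

end

theory Submission
  imports Defs
begin

text \<open>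
  If G - F has no fractional perfect matching, Hall's condition fails in G - F: otherwise Hall's
  theorem gives an injection \<sigma> of the vertices into their neighbourhoods, i.e. a fixed-point
  free permutation along edges, and half-weights along its cycles form a fractional perfect
  matching. Removing the neighbours from a Hall-violating set leaves a set X that is
  independent in G - F and has fewer than |X| neighbours there. All e(X) edges of G inside X
  were deleted, and every neighbour of X in G that is neither deleted nor adjacent to X in
  G - F accounts for another deleted edge, so e(X) + |N[X]| - |X| \<le> |F| + |X| - 1.

  In AQ_4 a finite check gives e(X) + |N[X]| \<ge> 2|X| + 7 whenever |X| \<ge> 2; it suffices to
  check sets inducing maximum degree at most 1, since removing a vertex with two neighbours
  inside X lowers e(X) by at least two. Hence |F| \<le> 7 forces X = {v}, |F| = 7 and v isolated
  in G - F, while the 7 edges at any vertex form a fractional strong matching preclusion set.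
\<close>

definition simple_graph :: "'a graph \<Rightarrow> bool" where
  "simple_graph G \<longleftrightarrow> (\<forall>e\<in>edges G. \<exists>u v. u \<noteq> v \<and> e = {u, v} \<and> u \<in> verts G \<and> v \<in> verts G)"

definition nbhd :: "'a graph \<Rightarrow> 'a set \<Rightarrow> 'a set" where
  "nbhd G S = {w. \<exists>u\<in>S. {u, w} \<in> edges G}"

definition induced_edges :: "'a graph \<Rightarrow> 'a set \<Rightarrow> 'a set set" where
  "induced_edges G X = {e \<in> edges G. e \<subseteq> X}"

definition max_induced_degree_le_one :: "'a graph \<Rightarrow> 'a set \<Rightarrow> bool" where
  "max_induced_degree_le_one G X \<longleftrightarrow> (\<forall>x\<in>X. card (nbhd G {x} \<inter> X) \<le> 1)"

lemma verts_delete [simp]: "verts (delete G FV FE) = verts G - FV"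
  by (simp add: delete_def verts_def)

lemma edges_delete [simp]: "edges (delete G FV FE) = {e \<in> edges G. e \<notin> FE \<and> e \<inter> FV = {}}"
  by (simp add: delete_def edges_def)

lemma simple_graph_delete:
  assumes "simple_graph G" shows "simple_graph (delete G FV FE)"
  unfolding simple_graph_def
proof
  fix e assume e: "e \<in> edges (delete G FV FE)"
  then obtain u v where "u \<noteq> v" "e = {u, v}" "u \<in> verts G" "v \<in> verts G"
    using assms unfolding simple_graph_def by auto
  with e show "\<exists>u v. u \<noteq> v \<and> e = {u, v} \<and> u \<in> verts (delete G FV FE) \<and> v \<in> verts (delete G FV FE)"
    by auto
qed

lemma finite_edges: "simple_graph G \<Longrightarrow> finite (verts G) \<Longrightarrow> finite (edges G)"
  by (rule finite_subset[of _ "Pow (verts G)"]) (auto simp: simple_graph_def)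

lemma simple_graph_edgeD:
  assumes "simple_graph G" "{u, w} \<in> edges G"
  shows "u \<noteq> w" "u \<in> verts G" "w \<in> verts G"
  using assms unfolding simple_graph_def by (metis doubleton_eq_iff)+

lemma simple_graph_edgeE:
  assumes "simple_graph G" "e \<in> edges G"
  obtains u v where "u \<noteq> v" "e = {u, v}" "u \<in> verts G" "v \<in> verts G"
  using assms unfolding simple_graph_def by metis

lemma nbhd_subset_verts: "simple_graph G \<Longrightarrow> nbhd G S \<subseteq> verts G"
  unfolding nbhd_def by (blast dest: simple_graph_edgeD)

lemma self_notin_nbhd: "simple_graph G \<Longrightarrow> v \<notin> nbhd G {v}"
  unfolding nbhd_def by (blast dest: simple_graph_edgeD)

lemma nbhd_mono: "S \<subseteq> T \<Longrightarrow> nbhd G S \<subseteq> nbhd G T"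
  unfolding nbhd_def by blast

lemma nbhd_UN: "nbhd G S = (\<Union>u\<in>S. nbhd G {u})"
  unfolding nbhd_def by blast

lemma nbhd_delete_subset: "nbhd (delete G FV FE) S \<subseteq> nbhd G S"
  unfolding nbhd_def by auto

lemma edges_at_eq_image_nbhd:
  "simple_graph G \<Longrightarrow> {e \<in> edges G. v \<in> e} = (\<lambda>w. {v, w}) ` nbhd G {v}"
proof
  assume "simple_graph G"
  show "{e \<in> edges G. v \<in> e} \<subseteq> (\<lambda>w. {v, w}) ` nbhd G {v}"
  proof
    fix e assume e: "e \<in> {e \<in> edges G. v \<in> e}"
    with \<open>simple_graph G\<close> obtain w where "e = {v, w}"
      unfolding simple_graph_def by (metis insert_commute insertE singletonD mem_Collect_eq)
    with e show "e \<in> (\<lambda>w. {v, w}) ` nbhd G {v}" unfolding nbhd_def by blast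
  qed
  show "(\<lambda>w. {v, w}) ` nbhd G {v} \<subseteq> {e \<in> edges G. v \<in> e}"
    unfolding nbhd_def by blast
qed

lemma inj_on_doubleton: "inj_on (\<lambda>w. {v, w}) A"
  by (auto intro: inj_onI simp: doubleton_eq_iff)

lemma degree_eq_card_nbhd: "simple_graph G \<Longrightarrow> degree G v = card (nbhd G {v})"
  unfolding degree_def by (simp add: edges_at_eq_image_nbhd card_image[OF inj_on_doubleton])

lemma has_isolated_vertex_if_nbhd_empty:
  assumes "simple_graph G" "v \<in> verts G" "nbhd G {v} = {}"
  shows "has_isolated_vertex G"
proof -
  have "{e \<in> edges G. v \<in> e} = {}"
    using edges_at_eq_image_nbhd[OF assms(1), of v] assms(3) by simp
  then show ?thesis
    unfolding has_isolated_vertex_def using assms(2) by blast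
qed

lemma no_fpm_if_isolated_vertex:
  assumes "has_isolated_vertex G" shows "\<not> has_fpm G"
proof
  obtain v where "v \<in> verts G" and "{e \<in> edges G. v \<in> e} = {}"
    using assms unfolding has_isolated_vertex_def by blast
  then show "has_fpm G \<Longrightarrow> False"
    unfolding has_fpm_def frac_perfect_matching_def by (metis sum.empty zero_neq_one)
qed

lemma card_induced_edges_insert:
  assumes G: "simple_graph G" "finite (verts G)" and v: "v \<notin> X"
  shows "card (induced_edges G (insert v X)) = card (induced_edges G X) + card (nbhd G {v} \<inter> X)"
proof -
  have "{e \<in> edges G. v \<in> e \<and> e \<subseteq> insert v X} = {e \<in> {e \<in> edges G. v \<in> e}. e \<subseteq> insert v X}"
    by blast
  also have "\<dots> = {e \<in> (\<lambda>w. {v, w}) ` nbhd G {v}. e \<subseteq> insert v X}"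
    by (simp only: edges_at_eq_image_nbhd[OF G(1)])
  also have "\<dots> = (\<lambda>w. {v, w}) ` (nbhd G {v} \<inter> X)"
    using self_notin_nbhd[OF G(1), of v] by auto
  finally have split: "induced_edges G (insert v X) = induced_edges G X \<union> (\<lambda>w. {v, w}) ` (nbhd G {v} \<inter> X)"
    unfolding induced_edges_def by blast
  have "induced_edges G X \<inter> (\<lambda>w. {v, w}) ` (nbhd G {v} \<inter> X) = {}"
    unfolding induced_edges_def using v by blast
  moreover have "finite (induced_edges G X)" "finite (nbhd G {v} \<inter> X)"
    using finite_edges[OF G] finite_subset[OF nbhd_subset_verts[OF G(1)] G(2)]
    unfolding induced_edges_def by auto
  ultimately show ?thesis
    unfolding split by (simp add: card_Un_disjoint card_image[OF inj_on_doubleton])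
qed

lemma hall_condition_outside_tight_set:
  fixes N :: "'a \<Rightarrow> 'b set"
  assumes fin: "finite A" "\<forall>a\<in>A. finite (N a)"
    and hall: "\<forall>S\<subseteq>A. card S \<le> card (\<Union>(N ` S))"
    and tight: "S \<subseteq> A" "card (\<Union>(N ` S)) = card S"
    and T: "T \<subseteq> A - S"
  shows "card T \<le> card (\<Union>((\<lambda>a. N a - \<Union>(N ` S)) ` T))"
proof -
  define NS where "NS = \<Union>(N ` S)"
  have finS: "finite S" "finite NS"
    using finite_subset[OF tight(1) fin(1)] fin(2) tight(1) unfolding NS_def by auto
  have finT: "finite T" "finite (\<Union>((\<lambda>a. N a - NS) ` T))"
    using finite_subset[OF _ fin(1)] fin(2) T by (auto intro!: finite_UN_I)
  have "card T + card S = card (T \<union> S)"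
    using T finT(1) finS(1) by (subst card_Un_disjoint) auto
  also have "\<dots> \<le> card (\<Union>(N ` (T \<union> S)))"
    using T tight(1) by (intro hall[rule_format]) blast
  also have "\<Union>(N ` (T \<union> S)) = \<Union>((\<lambda>a. N a - NS) ` T) \<union> NS"
    unfolding NS_def by auto
  also have "card \<dots> = card (\<Union>((\<lambda>a. N a - NS) ` T)) + card NS"
    using finT finS by (intro card_Un_disjoint) auto
  finally show ?thesis
    using tight(2) unfolding NS_def by simp
qed

lemma hall_condition_remove_element:
  fixes N :: "'a \<Rightarrow> 'b set"
  assumes fin: "finite A" "\<forall>a\<in>A. finite (N a)"
    and hall: "\<forall>S\<subseteq>A. card S \<le> card (\<Union>(N ` S))"
    and no_tight: "\<forall>S. S \<subset> A \<and> S \<noteq> {} \<longrightarrow> card (\<Union>(N ` S)) \<noteq> card S"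
    and a: "a \<in> A" and T: "T \<subseteq> A - {a}"
  shows "card T \<le> card (\<Union>((\<lambda>x. N x - {b}) ` T))"
proof (cases "T = {}")
  case False
  have finT: "finite (\<Union>(N ` T))"
    using finite_subset[OF _ fin(1)] fin(2) T by auto
  have "T \<subset> A"
    using T a by blast
  then have "card (\<Union>(N ` T)) \<noteq> card T"
    using no_tight False by simp
  moreover have "card T \<le> card (\<Union>(N ` T))"
    using T by (intro hall[rule_format]) blast
  ultimately have "card T < card (\<Union>(N ` T))"
    by simp
  moreover have "\<Union>((\<lambda>x. N x - {b}) ` T) = \<Union>(N ` T) - {b}"
    by blast
  ultimately show ?thesis
    using finT by (simp add: card_Diff_singleton_if) linarith
qed simp

lemma matching_combine:
  assumes "S \<subseteq> A" "inj_on f1 S" "\<forall>a\<in>S. f1 a \<in> N a"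
    and "inj_on f2 (A - S)" "\<forall>a\<in>A - S. f2 a \<in> N a - \<Union>(N ` S)"
  shows "\<exists>f. inj_on f A \<and> (\<forall>a\<in>A. f a \<in> N a)"
proof (intro exI conjI)
  define f where "f a = (if a \<in> S then f1 a else f2 a)" for a
  show "inj_on f A"
  proof (rule inj_onI)
    fix x y assume xy: "x \<in> A" "y \<in> A" "f x = f y"
    have "f a \<in> \<Union>(N ` S) \<longleftrightarrow> a \<in> S" if "a \<in> A" for a
      using that assms(3,5) unfolding f_def by auto
    with xy have "x \<in> S \<longleftrightarrow> y \<in> S"
      by metis
    with xy show "x = y"
      using assms(2,4) unfolding f_def by (auto dest: inj_onD split: if_splits)
  qed
  show "\<forall>a\<in>A. f a \<in> N a"
    using assms(3,5) unfolding f_def by auto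
qed

lemma matching_extend:
  assumes "a \<in> A" "b \<in> N a" "inj_on f (A - {a})" "\<forall>x\<in>A - {a}. f x \<in> N x - {b}"
  shows "\<exists>g. inj_on g A \<and> (\<forall>x\<in>A. g x \<in> N x)"
proof (intro exI conjI)
  have "inj_on (f(a := b)) (insert a (A - {a}))"
    using assms(3,4) by (auto simp: inj_on_def)
  then show "inj_on (f(a := b)) A"
    using assms(1) by (simp add: insert_absorb)
  show "\<forall>x\<in>A. (f(a := b)) x \<in> N x"
    using assms(2,4) by auto
qed

lemma hall_marriage:
  fixes N :: "'a \<Rightarrow> 'b set"
  assumes "finite A" "\<forall>a\<in>A. finite (N a)" "\<forall>S\<subseteq>A. card S \<le> card (\<Union>(N ` S))"
  shows "\<exists>f. inj_on f A \<and> (\<forall>a\<in>A. f a \<in> N a)"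
  using assms
proof (induction "card A" arbitrary: A N rule: less_induct)
  case less
  note fin = less.prems(1,2) and hall = less.prems(3)
  show ?case
  proof (cases "\<exists>S. S \<subset> A \<and> S \<noteq> {} \<and> card (\<Union>(N ` S)) = card S")
    case True
    then obtain S where S: "S \<subset> A" "S \<noteq> {}" "card (\<Union>(N ` S)) = card S"
      by blast
    have finS: "finite S"
      using S(1) fin(1) finite_subset by auto
    have "card S < card A" "\<forall>a\<in>S. finite (N a)" "\<forall>T\<subseteq>S. card T \<le> card (\<Union>(N ` T))"
      using S(1) fin hall psubset_card_mono by auto
    then obtain f1 where f1: "inj_on f1 S" "\<forall>a\<in>S. f1 a \<in> N a"
      using less.hyps[of S N] finS by blast
    have "\<exists>f. inj_on f (A - S) \<and> (\<forall>a\<in>A - S. f a \<in> N a - \<Union>(N ` S))"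
    proof (rule less.hyps)
      show "card (A - S) < card A"
        using S(1,2) fin(1) finS psubset_card_mono[of A S] card_gt_0_iff[of S]
        by (simp add: card_Diff_subset psubset_imp_subset)
      show "\<forall>T\<subseteq>A - S. card T \<le> card (\<Union>a\<in>T. N a - \<Union>(N ` S))"
        using hall_condition_outside_tight_set[OF fin hall _ S(3)] S(1) by blast
    qed (use fin in auto)
    then obtain f2 where "inj_on f2 (A - S)" "\<forall>a\<in>A - S. f2 a \<in> N a - \<Union>(N ` S)"
      by blast
    then show ?thesis
      using matching_combine[OF psubset_imp_subset[OF S(1)] f1] by blast
  next
    case False
    then have no_tight: "\<forall>S. S \<subset> A \<and> S \<noteq> {} \<longrightarrow> card (\<Union>(N ` S)) \<noteq> card S"
      by blast
    show ?thesis
    proof (cases "A = {}")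
      case nonempty: False
      then obtain a where a: "a \<in> A"
        by blast
      have "card {a} \<le> card (\<Union>(N ` {a}))"
        using a by (intro hall[rule_format]) blast
      then obtain b where b: "b \<in> N a"
        by fastforce
      have "\<exists>f. inj_on f (A - {a}) \<and> (\<forall>x\<in>A - {a}. f x \<in> N x - {b})"
      proof (rule less.hyps[OF card_Diff1_less[OF fin(1) a]])
        show "\<forall>T\<subseteq>A - {a}. card T \<le> card (\<Union>x\<in>T. N x - {b})"
          using hall_condition_remove_element[OF fin hall no_tight a] by blast
      qed (use fin in auto)
      then show ?thesis
        using matching_extend[of a A b N, OF a b] by blast
    qed simp
  qed
qed

lemma card_self_or_preimage:
  assumes "bij_betw \<sigma> A A" "v \<in> A" "\<sigma> v \<noteq> v"
  shows "card {w \<in> A. w = v \<or> \<sigma> w = v} = 2"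
proof -
  define u where "u = inv_into A \<sigma> v"
  have u: "u \<in> A" "\<sigma> u = v"
    using assms(1,2) unfolding u_def by (auto simp: bij_betw_inv_into_right bij_betw_imp_surj_on inv_into_into)
  have "{w \<in> A. w = v \<or> \<sigma> w = v} = {v, u}"
  proof (intro equalityI subsetI)
    fix w assume "w \<in> {w \<in> A. w = v \<or> \<sigma> w = v}"
    then show "w \<in> {v, u}"
      using bij_betw_inv_into_left[OF assms(1)] unfolding u_def by auto
  qed (use assms(2) u in auto)
  moreover have "u \<noteq> v"
    using u(2) assms(3) by blast
  ultimately show ?thesis
    by simp
qed

text \<open>Weight each edge by half the number of vertices w with edge {w, \<sigma> w}: edges on a 2-cycle of
  \<sigma> get weight 1, all other edges on cycles of \<sigma> weight 1/2.\<close>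

lemma has_fpm_if_edge_permutation:
  assumes G: "simple_graph G" "finite (verts G)"
    and \<sigma>: "bij_betw \<sigma> (verts G) (verts G)"
    and edge: "\<And>w. w \<in> verts G \<Longrightarrow> {w, \<sigma> w} \<in> edges G"
  shows "has_fpm G"
proof -
  define c where "c e = card {w \<in> verts G. {w, \<sigma> w} = e}" for e
  have c_le_2: "c e \<le> 2" if e: "e \<in> edges G" for e
  proof -
    obtain u v where "e = {u, v}"
      using simple_graph_edgeE[OF G(1) e] by metis
    then have "c e \<le> card {u, v}"
      unfolding c_def by (intro card_mono) auto
    also have "\<dots> \<le> 2"
      by (simp add: card_insert_if)
    finally show ?thesis .
  qed
  have c_sum: "(\<Sum>e\<in>{e \<in> edges G. v \<in> e}. c e) = 2" if v: "v \<in> verts G" for v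
  proof -
    have "(\<Sum>e\<in>{e \<in> edges G. v \<in> e}. c e)
        = card (\<Union>e\<in>{e \<in> edges G. v \<in> e}. {w \<in> verts G. {w, \<sigma> w} = e})"
      unfolding c_def using G by (intro card_UN_disjoint[symmetric]) (auto simp: finite_edges)
    also have "(\<Union>e\<in>{e \<in> edges G. v \<in> e}. {w \<in> verts G. {w, \<sigma> w} = e}) = {w \<in> verts G. w = v \<or> \<sigma> w = v}"
      using edge by auto
    also have "card \<dots> = 2"
      using card_self_or_preimage[OF \<sigma> v] simple_graph_edgeD(1)[OF G(1) edge[OF v]] by simp
    finally show ?thesis .
  qed
  define f where "f e = real (c e) / 2" for e
  have "frac_perfect_matching G f"
    unfolding frac_perfect_matching_def
  proof (intro conjI ballI)
    fix e assume "e \<in> edges G"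
    then show "0 \<le> f e" "f e \<le> 1"
      using c_le_2[of e] unfolding f_def by auto
  next
    fix v assume "v \<in> verts G"
    then show "(\<Sum>e\<in>{e \<in> edges G. v \<in> e}. f e) = 1"
      using c_sum unfolding f_def by (simp add: sum_divide_distrib[symmetric] flip: of_nat_sum)
  qed
  then show ?thesis
    unfolding has_fpm_def by blast
qed

lemma has_fpm_if_hall_condition:
  assumes G: "simple_graph G" "finite (verts G)"
    and hall: "\<And>S. S \<subseteq> verts G \<Longrightarrow> card S \<le> card (nbhd G S)"
  shows "has_fpm G"
proof -
  have "\<exists>\<sigma>. inj_on \<sigma> (verts G) \<and> (\<forall>v\<in>verts G. \<sigma> v \<in> nbhd G {v})"
  proof (rule hall_marriage)
    show "\<forall>v\<in>verts G. finite (nbhd G {v})"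
      using G finite_subset[OF nbhd_subset_verts] by blast
    show "\<forall>S\<subseteq>verts G. card S \<le> card (\<Union>v\<in>S. nbhd G {v})"
      using hall by (simp flip: nbhd_UN)
  qed (use G in simp)
  then obtain \<sigma> where \<sigma>: "inj_on \<sigma> (verts G)" "\<forall>v\<in>verts G. \<sigma> v \<in> nbhd G {v}"
    by blast
  have "\<sigma> ` verts G \<subseteq> verts G"
    using \<sigma>(2) nbhd_subset_verts[OF G(1)] by blast
  then have "bij_betw \<sigma> (verts G) (verts G)"
    using endo_inj_surj[OF G(2) _ \<sigma>(1)] \<sigma>(1) unfolding bij_betw_def by blast
  moreover have "{w, \<sigma> w} \<in> edges G" if "w \<in> verts G" for w
    using \<sigma>(2) that unfolding nbhd_def by blast
  ultimately show ?thesis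
    using has_fpm_if_edge_permutation[OF G] by blast
qed

lemma deficient_independent_set:
  assumes G: "simple_graph G" "finite (verts G)" and no_fpm: "\<not> has_fpm G"
  obtains X where "X \<subseteq> verts G" "nbhd G X \<inter> X = {}" "card (nbhd G X) < card X"
proof -
  obtain S where S: "S \<subseteq> verts G" "card (nbhd G S) < card S"
    using has_fpm_if_hall_condition[OF G] no_fpm by (meson not_le)
  define X where "X = S - nbhd G S"
  have finite: "finite S" "finite (nbhd G S)"
    using S(1) G finite_subset nbhd_subset_verts by blast+
  have X_nbhd: "nbhd G X \<subseteq> nbhd G S - S"
  proof
    fix w assume "w \<in> nbhd G X"
    then obtain u where u: "u \<in> X" "{u, w} \<in> edges G"
      unfolding nbhd_def by blast
    then have "{w, u} \<in> edges G"
      by (simp add: insert_commute)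
    with u show "w \<in> nbhd G S - S"
      unfolding X_def nbhd_def by blast
  qed
  have "card (nbhd G X) \<le> card (nbhd G S) - card (nbhd G S \<inter> S)"
    using card_mono[OF _ X_nbhd] finite by (simp add: card_Diff_subset_Int)
  also have "\<dots> < card S - card (S \<inter> nbhd G S)"
    using S(2) card_mono[OF finite(2), of "nbhd G S \<inter> S"] by (simp add: Int_commute)
  also have "\<dots> = card X"
    unfolding X_def using finite by (simp add: card_Diff_subset_Int)
  finally have "card (nbhd G X) < card X" .
  moreover have "nbhd G X \<inter> X = {}"
    using X_nbhd unfolding X_def by blast
  moreover have "X \<subseteq> verts G"
    using S(1) unfolding X_def by blast
  ultimately show ?thesis
    using that by blast
qed

lemma induced_edges_subset_deleted:
  assumes G: "simple_graph G"
    and X: "X \<inter> FV = {}" "nbhd (delete G FV FE) X \<inter> X = {}"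
  shows "induced_edges G X \<subseteq> FE"
proof
  fix e assume "e \<in> induced_edges G X"
  then have e: "e \<in> edges G" "e \<subseteq> X"
    unfolding induced_edges_def by auto
  then obtain u w where "e = {u, w}"
    using simple_graph_edgeE[OF G] by metis
  with e have uw: "e = {u, w}" "e \<in> edges G" "u \<in> X" "w \<in> X"
    by auto
  have "e \<inter> FV = {}"
    using uw X(1) by blast
  with uw X(2) show "e \<in> FE"
    unfolding nbhd_def by auto
qed

text \<open>Every neighbour of X that survives in G - F but is not adjacent to X there
  witnesses its own deleted edge to X; these edges are distinct and lie outside X.\<close>

lemma deleted_edges_bound:
  assumes G: "simple_graph G" "finite (verts G)"
    and F: "FE \<subseteq> edges G"
    and X: "X \<inter> FV = {}" "nbhd (delete G FV FE) X \<inter> X = {}"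
  shows "card (induced_edges G X) + card (nbhd G X - X - FV - nbhd (delete G FV FE) X) \<le> card FE"
proof -
  define C where "C = nbhd G X - X - FV - nbhd (delete G FV FE) X"
  have fin: "finite FE" "finite (induced_edges G X)"
    using finite_subset[OF F finite_edges[OF G]] finite_edges[OF G]
    unfolding induced_edges_def by simp_all
  have "\<forall>w\<in>C. \<exists>u\<in>X. {u, w} \<in> edges G"
    unfolding C_def nbhd_def by blast
  then obtain p where p: "\<And>w. w \<in> C \<Longrightarrow> p w \<in> X \<and> {p w, w} \<in> edges G"
    by metis
  define g where "g w = {p w, w}" for w
  have crossing: "g ` C \<subseteq> FE"
  proof
    fix e assume "e \<in> g ` C"
    then obtain w where w: "w \<in> C" "e = {p w, w}"
      unfolding g_def by blast
    have "e \<inter> FV = {}"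
      using w p[OF w(1)] X(1) unfolding C_def by blast
    with w p[OF w(1)] show "e \<in> FE"
      unfolding C_def nbhd_def by auto
  qed
  have "inj_on g C"
  proof (rule inj_onI)
    fix w w' assume "w \<in> C" "w' \<in> C" "g w = g w'"
    with p show "w = w'"
      unfolding g_def C_def by (metis DiffD1 DiffD2 doubleton_eq_iff)
  qed
  moreover have "induced_edges G X \<inter> g ` C = {}"
    unfolding induced_edges_def g_def C_def by blast
  ultimately have "card (induced_edges G X) + card C = card (induced_edges G X \<union> g ` C)"
    using fin(2) finite_subset[OF crossing fin(1)] by (simp add: card_Un_disjoint card_image)
  also have "\<dots> \<le> card FE"
    using induced_edges_subset_deleted[OF G(1) X] crossing fin(1) by (intro card_mono) auto
  finally show ?thesis
    unfolding C_def .
qed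

lemma deletion_cost:
  assumes G: "simple_graph G" "finite (verts G)"
    and F: "FV \<subseteq> verts G" "FE \<subseteq> edges G"
    and X: "X \<subseteq> verts G - FV" "nbhd (delete G FV FE) X \<inter> X = {}"
  shows "card (induced_edges G X) + card (nbhd G X - X)
           \<le> card FV + card FE + card (nbhd (delete G FV FE) X)"
proof -
  let ?NH = "nbhd (delete G FV FE) X"
  let ?C = "nbhd G X - X - FV - ?NH"
  have fin_nbhd: "finite (nbhd G X)"
    using finite_subset[OF nbhd_subset_verts G(2)] G(1) .
  have "card (nbhd G X - X) \<le> card (FV \<union> ?C \<union> ?NH)"
    using fin_nbhd finite_subset[OF F(1) G(2)] finite_subset[OF nbhd_delete_subset fin_nbhd]
    by (intro card_mono) auto
  also have "\<dots> \<le> card FV + card ?C + card ?NH"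
    by (meson card_Un_le add_le_mono order_refl order_trans)
  finally have "card (nbhd G X - X) \<le> card FV + card ?C + card ?NH" .
  moreover have "X \<inter> FV = {}"
    using X(1) by blast
  then have "card (induced_edges G X) + card ?C \<le> card FE"
    by (rule deleted_edges_bound[OF G F(2) _ X(2)])
  ultimately show ?thesis
    by linarith
qed

lemma max_induced_degree_le_one_subset:
  assumes "finite B" "A \<subseteq> B" "max_induced_degree_le_one G B"
  shows "max_induced_degree_le_one G A"
  unfolding max_induced_degree_le_one_def
proof
  fix x assume "x \<in> A"
  then have "card (nbhd G {x} \<inter> A) \<le> card (nbhd G {x} \<inter> B)" "card (nbhd G {x} \<inter> B) \<le> 1"
    using assms unfolding max_induced_degree_le_one_def by (auto intro: card_mono)
  then show "card (nbhd G {x} \<inter> A) \<le> 1"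
    by linarith
qed

lemma expansion_if_expansion_on_sparse_sets:
  assumes G: "simple_graph G" "finite (verts G)"
    and sparse: "\<And>X. X \<subseteq> verts G \<Longrightarrow> 2 \<le> card X \<Longrightarrow> max_induced_degree_le_one G X \<Longrightarrow>
                   2 * card X + d \<le> card (induced_edges G X) + card (X \<union> nbhd G X)"
  shows "X \<subseteq> verts G \<Longrightarrow> 2 \<le> card X \<Longrightarrow>
           2 * card X + d \<le> card (induced_edges G X) + card (X \<union> nbhd G X)"
proof (induction "card X" arbitrary: X rule: less_induct)
  case less
  show ?case
  proof (cases "max_induced_degree_le_one G X")
    case False
    then obtain v where v: "v \<in> X" "2 \<le> card (nbhd G {v} \<inter> X)"
      unfolding max_induced_degree_le_one_def by auto
    define X' where "X' = X - {v}"
    have finite: "finite X" "finite (X \<union> nbhd G X)"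
      using less.prems(1) G finite_subset nbhd_subset_verts by (metis finite_Un)+
    have "nbhd G {v} \<inter> X = nbhd G {v} \<inter> X'"
      unfolding X'_def using self_notin_nbhd[OF G(1)] by blast
    then have more_edges: "2 \<le> card (nbhd G {v} \<inter> X')"
      using v(2) by simp
    moreover have "2 \<le> card X'"
      using more_edges finite(1) card_mono[of X' "nbhd G {v} \<inter> X'"] unfolding X'_def by auto
    moreover have card_X: "card X = Suc (card X')"
      using card_Suc_Diff1[OF finite(1) v(1)] unfolding X'_def by simp
    ultimately have IH: "2 * card X' + d \<le> card (induced_edges G X') + card (X' \<union> nbhd G X')"
      using less X'_def by auto
    have "insert v X' = X" "v \<notin> X'"
      unfolding X'_def using v(1) by auto
    then have "card (induced_edges G X) = card (induced_edges G X') + card (nbhd G {v} \<inter> X')"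
      using card_induced_edges_insert[OF G] by metis
    moreover have "card (X' \<union> nbhd G X') \<le> card (X \<union> nbhd G X)"
      using finite(2) nbhd_mono[of X' X G] unfolding X'_def by (intro card_mono) auto
    ultimately show ?thesis
      using IH more_edges card_X by linarith
  qed (use less.prems sparse in blast)
qed

lemma isolated_vertex_if_no_fpm:
  assumes G: "simple_graph G" "finite (verts G)"
    and degree: "\<And>v. v \<in> verts G \<Longrightarrow> \<delta> \<le> card (nbhd G {v})"
    and expansion: "\<And>X. X \<subseteq> verts G \<Longrightarrow> 2 \<le> card X \<Longrightarrow>
                      2 * card X + \<delta> \<le> card (induced_edges G X) + card (X \<union> nbhd G X)"
    and F: "FV \<subseteq> verts G" "FE \<subseteq> edges G" "card FV + card FE \<le> \<delta>"
    and no_fpm: "\<not> has_fpm (delete G FV FE)"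
  shows "card FV + card FE = \<delta> \<and> has_isolated_vertex (delete G FV FE)"
proof -
  let ?H = "delete G FV FE"
  obtain X where X: "X \<subseteq> verts G - FV" "nbhd ?H X \<inter> X = {}" "card (nbhd ?H X) < card X"
    using deficient_independent_set[OF simple_graph_delete[OF G(1)] _ no_fpm] G(2) by auto
  have cost: "card (induced_edges G X) + card (nbhd G X - X) \<le> card FV + card FE + card (nbhd ?H X)"
    using deletion_cost[OF G F(1,2) X(1,2)] .
  have finite: "finite X" "finite (nbhd G X)" "finite (nbhd ?H X)"
    using X(1) G finite_subset nbhd_subset_verts nbhd_delete_subset by (metis Diff_subset subset_trans)+
  have "card X < 2"
  proof (rule ccontr)
    assume "\<not> card X < 2"
    then have "2 * card X + \<delta> \<le> card (induced_edges G X) + card (X \<union> nbhd G X)"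
      using X(1) by (intro expansion) auto
    moreover have "card (X \<union> nbhd G X) = card X + card (nbhd G X - X)"
      using finite by (metis Un_Diff_cancel card_Un_disjoint Diff_disjoint finite_Diff)
    ultimately show False
      using cost X(3) F(3) by linarith
  qed
  then have "card X = 1"
    using X(3) by linarith
  then obtain v where v: "X = {v}"
    by (rule card_1_singletonE)
  then have "nbhd ?H {v} = {}" "v \<in> verts G - FV"
    using X(1,3) finite(3) by auto
  moreover have "nbhd G X - X = nbhd G {v}"
    using v self_notin_nbhd[OF G(1)] by blast
  ultimately have "\<delta> \<le> card FV + card FE"
    using cost degree[of v] v by simp
  then show ?thesis
    using F(3) has_isolated_vertex_if_nbhd_empty[OF simple_graph_delete[OF G(1)]] \<open>nbhd ?H {v} = {}\<close>
      \<open>v \<in> verts G - FV\<close> by simp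
qed

lemma fsmp_eq_if_expansion:
  assumes G: "simple_graph G" "finite (verts G)"
    and degree: "\<And>v. v \<in> verts G \<Longrightarrow> \<delta> \<le> card (nbhd G {v})"
    and expansion: "\<And>X. X \<subseteq> verts G \<Longrightarrow> 2 \<le> card X \<Longrightarrow>
                      2 * card X + \<delta> \<le> card (induced_edges G X) + card (X \<union> nbhd G X)"
    and v: "v \<in> verts G" "card (nbhd G {v}) = \<delta>"
  shows "fsmp G = \<delta>"
  unfolding fsmp_def
proof (rule Least_equality)
  define FE where "FE = {e \<in> edges G. v \<in> e}"
  have "has_isolated_vertex (delete G {} FE)"
    using v(1) unfolding has_isolated_vertex_def FE_def by auto
  then have "\<not> has_fpm (delete G {} FE)"
    by (rule no_fpm_if_isolated_vertex)
  then have "fsmp_set G {} FE"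
    unfolding fsmp_set_def FE_def by auto
  moreover have "card FE = \<delta>"
    using v degree_eq_card_nbhd[OF G(1)] unfolding FE_def degree_def by simp
  moreover have "finite FE"
    using finite_edges[OF G] unfolding FE_def by simp
  ultimately show "\<exists>FV FE. fsmp_set G FV FE \<and> finite FV \<and> finite FE \<and> card FV + card FE = \<delta>"
    by (intro exI[of _ "{}"] exI[of _ FE]) simp
next
  fix k assume "\<exists>FV FE. fsmp_set G FV FE \<and> finite FV \<and> finite FE \<and> card FV + card FE = k"
  then obtain FV FE where "fsmp_set G FV FE" "card FV + card FE = k"
    by blast
  then show "\<delta> \<le> k"
    using isolated_vertex_if_no_fpm[OF G degree expansion, of FV FE] unfolding fsmp_set_def
    by (cases "k \<le> \<delta>") auto
qed

fun hereditary_subsets_check :: "('a list \<Rightarrow> bool) \<Rightarrow> ('a list \<Rightarrow> bool) \<Rightarrow> 'a list \<Rightarrow> 'a list \<Rightarrow> bool" where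
  "hereditary_subsets_check keep test acc [] \<longleftrightarrow> True"
| "hereditary_subsets_check keep test acc (v # vs) \<longleftrightarrow>
     (if keep (v # acc) then test (v # acc) \<and> hereditary_subsets_check keep test (v # acc) vs else True)
     \<and> hereditary_subsets_check keep test acc vs"

lemma hereditary_subsets_check_sound:
  assumes "hereditary_subsets_check keep test acc vs"
    and "distinct (acc @ vs)" "set (acc @ vs) \<subseteq> U"
    and hereditary: "\<And>A B. B \<subseteq> U \<Longrightarrow> A \<subseteq> B \<Longrightarrow> P B \<Longrightarrow> P A"
    and keep: "\<And>xs. distinct xs \<Longrightarrow> set xs \<subseteq> U \<Longrightarrow> P (set xs) \<Longrightarrow> keep xs"
    and test: "\<And>xs. distinct xs \<Longrightarrow> set xs \<subseteq> U \<Longrightarrow> P (set xs) \<Longrightarrow> test xs \<Longrightarrow> Q (set xs)"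
    and "Y \<subseteq> set vs" "Y \<noteq> {}" "P (set acc \<union> Y)"
  shows "Q (set acc \<union> Y)"
  using assms(1-3,7-9)
proof (induction vs arbitrary: acc Y)
  case (Cons v vs)
  show ?case
  proof (cases "v \<in> Y")
    case False
    then show ?thesis
      using Cons.IH[of acc Y] Cons.prems by (auto split: if_splits)
  next
    case True
    have acc': "distinct (v # acc)" "set (v # acc) \<subseteq> U"
      using Cons.prems(2,3) by auto
    have "set (v # acc) \<subseteq> set acc \<union> Y" "set acc \<union> Y \<subseteq> U"
      using True Cons.prems(3,4) by auto
    then have P_acc': "P (set (v # acc))"
      using hereditary Cons.prems(6) by blast
    then have "test (v # acc)" "hereditary_subsets_check keep test (v # acc) vs"
      using Cons.prems(1) keep[OF acc'] by auto
    show ?thesis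
    proof (cases "Y = {v}")
      case True
      then show ?thesis
        using test[OF acc' P_acc' \<open>test (v # acc)\<close>] by simp
    next
      case False
      have "set (v # acc) \<union> (Y - {v}) = set acc \<union> Y"
        using \<open>v \<in> Y\<close> by auto
      moreover have "distinct ((v # acc) @ vs)" "set ((v # acc) @ vs) \<subseteq> U" "Y - {v} \<subseteq> set vs"
        using Cons.prems(2,3,4) by auto
      ultimately show ?thesis
        using Cons.IH[of "v # acc" "Y - {v}"] \<open>hereditary_subsets_check keep test (v # acc) vs\<close>
          False Cons.prems(5,6) by auto
    qed
  qed
qed simp

lemma aq_adj_length: "aq_adj u v \<Longrightarrow> length u = length v"
  by (cases "(u, v)" rule: aq_adj.cases) auto

lemma aq_adj_commute: "aq_adj u v \<longleftrightarrow> aq_adj v u"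
  by (induction u v rule: aq_adj.induct) (auto simp: list_all2_conv_all_nth)

lemma aq_adj_irrefl: "\<not> aq_adj u u"
  by (induction u) auto

lemma verts_AQ: "verts (AQ n) = {u. length u = n}"
  by (simp add: AQ_def verts_def)

lemma edge_AQ_iff: "{u, v} \<in> edges (AQ n) \<longleftrightarrow> length u = n \<and> length v = n \<and> aq_adj u v"
proof
  assume "{u, v} \<in> edges (AQ n)"
  then obtain a b where "{u, v} = {a, b}" "length a = n" "length b = n" "aq_adj a b"
    unfolding AQ_def edges_def by auto
  then show "length u = n \<and> length v = n \<and> aq_adj u v"
    using aq_adj_commute by (metis doubleton_eq_iff)
qed (auto simp: AQ_def edges_def)

lemma simple_graph_AQ: "simple_graph (AQ n)"
  unfolding simple_graph_def
proof
  fix e assume "e \<in> edges (AQ n)"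
  then obtain u v where uv: "e = {u, v}" "length u = n" "length v = n" "aq_adj u v"
    unfolding AQ_def edges_def by auto
  then have "u \<noteq> v"
    using aq_adj_irrefl by metis
  with uv show "\<exists>u v. u \<noteq> v \<and> e = {u, v} \<and> u \<in> verts (AQ n) \<and> v \<in> verts (AQ n)"
    by (intro exI[of _ u] exI[of _ v]) (simp add: verts_AQ)
qed

lemma nbhd_AQ: "nbhd (AQ n) X = {w \<in> verts (AQ n). \<exists>x\<in>X. aq_adj x w}"
  unfolding nbhd_def verts_AQ edge_AQ_iff by (auto dest: aq_adj_length)

definition aq_vertex_list :: "nat \<Rightarrow> bool list list" where
  "aq_vertex_list n = List.n_lists n [False, True]"

lemma set_aq_vertex_list: "set (aq_vertex_list n) = verts (AQ n)"
  by (auto simp: aq_vertex_list_def set_n_lists verts_AQ)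

lemma distinct_aq_vertex_list: "distinct (aq_vertex_list n)"
  by (simp add: aq_vertex_list_def distinct_n_lists)

lemma finite_verts_AQ: "finite (verts (AQ n))"
  by (metis List.finite_set set_aq_vertex_list)

lemma card_nbhd_inter_AQ:
  assumes "distinct xs" "set xs \<subseteq> verts (AQ n)"
  shows "card (nbhd (AQ n) {x} \<inter> set xs) = length (filter (aq_adj x) xs)"
proof -
  have "nbhd (AQ n) {x} \<inter> set xs = {w. aq_adj x w} \<inter> set xs"
    using assms(2) unfolding nbhd_AQ by auto
  then show ?thesis
    using distinct_length_filter[OF assms(1)] by simp
qed

lemma card_AQ_vertex_filter:
  "card {w \<in> verts (AQ n). P w} = length (filter P (aq_vertex_list n))"
  using distinct_length_filter[OF distinct_aq_vertex_list, of P n]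
  unfolding set_aq_vertex_list by (simp add: Collect_conj_eq Int_commute)

lemma card_nbhd_AQ4: "v \<in> verts (AQ 4) \<Longrightarrow> card (nbhd (AQ 4) {v}) = 7"
proof -
  have "list_all (\<lambda>v. length (filter (aq_adj v) (aq_vertex_list 4)) = 7) (aq_vertex_list 4)"
    by code_simp
  moreover assume "v \<in> verts (AQ 4)"
  ultimately show ?thesis
    unfolding nbhd_AQ card_AQ_vertex_filter by (simp add: list_all_iff set_aq_vertex_list)
qed

fun aq_edge_count :: "bool list list \<Rightarrow> nat" where
  "aq_edge_count [] = 0"
| "aq_edge_count (v # xs) = aq_edge_count xs + length (filter (aq_adj v) xs)"

lemma aq_edge_count_eq:
  "distinct xs \<Longrightarrow> set xs \<subseteq> verts (AQ n) \<Longrightarrow> aq_edge_count xs = card (induced_edges (AQ n) (set xs))"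
proof (induction xs)
  case Nil
  have "induced_edges (AQ n) {} = {}"
    unfolding induced_edges_def using simple_graph_edgeE[OF simple_graph_AQ] by blast
  then show ?case
    by simp
next
  case (Cons v xs)
  then show ?case
    using card_induced_edges_insert[OF simple_graph_AQ finite_verts_AQ, of v "set xs"]
      card_nbhd_inter_AQ[of xs n v] by simp
qed

lemma max_induced_degree_le_one_AQ_iff:
  "distinct xs \<Longrightarrow> set xs \<subseteq> verts (AQ n) \<Longrightarrow>
     max_induced_degree_le_one (AQ n) (set xs) \<longleftrightarrow> list_all (\<lambda>x. length (filter (aq_adj x) xs) \<le> 1) xs"
  unfolding max_induced_degree_le_one_def list_all_iff by (simp add: card_nbhd_inter_AQ)

definition aq4_expansion_test :: "bool list list \<Rightarrow> bool" where
  "aq4_expansion_test xs \<longleftrightarrow> (2 \<le> length xs \<longrightarrow>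
     2 * length xs + 7 \<le> aq_edge_count xs
       + length (filter (\<lambda>w. list_ex (\<lambda>x. w = x \<or> aq_adj x w) xs) (aq_vertex_list 4)))"

text \<open>This visits the 792 nonempty vertex sets of AQ_4 inducing maximum degree at most 1.\<close>

lemma aq4_expansion_check:
  "hereditary_subsets_check (\<lambda>xs. list_all (\<lambda>x. length (filter (aq_adj x) xs) \<le> 1) xs)
     aq4_expansion_test [] (aq_vertex_list 4)"
  by code_simp

lemma expansion_sparse_AQ4:
  assumes X: "X \<subseteq> verts (AQ 4)" "2 \<le> card X" and sparse: "max_induced_degree_le_one (AQ 4) X"
  shows "2 * card X + 7 \<le> card (induced_edges (AQ 4) X) + card (X \<union> nbhd (AQ 4) X)"
proof -
  let ?Q = "\<lambda>X. 2 \<le> card X \<longrightarrow>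
              2 * card X + 7 \<le> card (induced_edges (AQ 4) X) + card (X \<union> nbhd (AQ 4) X)"
  have "?Q (set [] \<union> X)"
  proof (rule hereditary_subsets_check_sound[OF aq4_expansion_check])
    fix A B :: "bool list set"
    assume "B \<subseteq> verts (AQ 4)" "A \<subseteq> B" "max_induced_degree_le_one (AQ 4) B"
    then show "max_induced_degree_le_one (AQ 4) A"
      using max_induced_degree_le_one_subset finite_subset finite_verts_AQ by metis
  next
    fix xs assume xs: "distinct xs" "set xs \<subseteq> verts (AQ 4)"
    show "max_induced_degree_le_one (AQ 4) (set xs) \<Longrightarrow>
            list_all (\<lambda>x. length (filter (aq_adj x) xs) \<le> 1) xs"
      using max_induced_degree_le_one_AQ_iff[OF xs] by blast
    have "set xs \<union> nbhd (AQ 4) (set xs) = {w \<in> verts (AQ 4). list_ex (\<lambda>x. w = x \<or> aq_adj x w) xs}"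
      using xs(2) unfolding nbhd_AQ list_ex_iff by auto
    then show "aq4_expansion_test xs \<Longrightarrow> ?Q (set xs)"
      unfolding aq4_expansion_test_def
      using aq_edge_count_eq[OF xs] distinct_card[OF xs(1)] card_AQ_vertex_filter by simp
  qed (use X sparse in \<open>auto simp: distinct_aq_vertex_list set_aq_vertex_list\<close>)
  then show ?thesis
    using X by simp
qed

lemma expansion_AQ4:
  "X \<subseteq> verts (AQ 4) \<Longrightarrow> 2 \<le> card X \<Longrightarrow>
     2 * card X + 7 \<le> card (induced_edges (AQ 4) X) + card (X \<union> nbhd (AQ 4) X)"
  using expansion_if_expansion_on_sparse_sets[OF simple_graph_AQ finite_verts_AQ expansion_sparse_AQ4] .

theorem lemma4p1:
  shows "frac_strongly_maximally_matched (AQ 4) \<and> frac_strongly_super_matched (AQ 4)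
     \<and> fsmp (AQ 4) = 7
     \<and> (\<forall>FV FE. fsmp_set (AQ 4) FV FE \<and> finite FV \<and> finite FE \<and> card FV + card FE = 7
           \<longrightarrow> has_isolated_vertex (delete (AQ 4) FV FE))"
proof -
  note G = simple_graph_AQ[of 4] finite_verts_AQ[of 4]
  have degree: "\<And>v. v \<in> verts (AQ 4) \<Longrightarrow> 7 \<le> card (nbhd (AQ 4) {v})"
    using card_nbhd_AQ4 by simp
  have "[False, False, False, False] \<in> verts (AQ 4)"
    by (simp add: verts_AQ)
  then have fsmp: "fsmp (AQ 4) = 7"
    using fsmp_eq_if_expansion[OF G degree expansion_AQ4] card_nbhd_AQ4 by blast
  have "degree (AQ 4) ` verts (AQ 4) = {7}"
    using \<open>[False, False, False, False] \<in> verts (AQ 4)\<close> card_nbhd_AQ4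
    by (auto simp: degree_eq_card_nbhd[OF G(1)])
  then have "min_degree (AQ 4) = 7"
    by (simp add: min_degree_def)
  moreover have isolated: "\<forall>FV FE. fsmp_set (AQ 4) FV FE \<and> finite FV \<and> finite FE \<and> card FV + card FE = 7
           \<longrightarrow> has_isolated_vertex (delete (AQ 4) FV FE)"
    using isolated_vertex_if_no_fpm[OF G degree expansion_AQ4] by (simp add: fsmp_set_def)
  ultimately show ?thesis
    using fsmp unfolding frac_strongly_super_matched_def frac_strongly_maximally_matched_def
      optimal_fsmp_set_def by simp
qed

end
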